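(* Let $(B_t)_{t\ge 0}$ be a standard Brownian motion, let $a,\sigma\in\mathbb{R}$, and define $X^*_t = X^*_0 + \sigma t B_t + a t$ for $t\ge 0$. If $X^*_0 = 0$, then $(X^*_t)_{t>0}$ is a process with proportional increments on $]0,+\infty[$, i.e. for every $t>0$ with $X^*_t\neq 0$ and every $s\ge 0$, $$E\big(X^*_{t+s}-X^*_t \,\big|\, \mathcal{F}_t\big) = \frac{s}{t}\,X^*_t \quad \text{a.s.},$$ where $\mathcal{F}_t=\sigma(X^*_u : u\le t)$ is the natural filtration of $X^*$.
   Context: A stochastic process $(N_t)_{t>0}$ on a probability space, with natural filtration $\mathcal{F}_t=\sigma(N_u: u\le t)$, is called a process with proportional increments on $]0,+\infty[$ if for all $t>0$ with $N_t\neq 0$ and all $s\ge 0$: $E(N_{t+s}-N_t\mid\mathcal{F}_t)=\frac{s}{t}N_t$ almost surely. *)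

theory Defs
  imports "HOL-Probability.Probability"
begin

definition std_brownian_motion :: "'a measure \<Rightarrow> (real \<Rightarrow> 'a \<Rightarrow> real) \<Rightarrow> bool" where
  "std_brownian_motion M B \<longleftrightarrow>
     prob_space M \<and>
     (\<forall>t. B t \<in> borel_measurable M) \<and>
     (AE x in M. B 0 x = 0) \<and>
     (AE x in M. continuous_on {0..} (\<lambda>t. B t x)) \<and>
     (\<forall>s t. 0 \<le> s \<and> s < t \<longrightarrow>
        distributed M lborel (\<lambda>x. B t x - B s x) (\<lambda>y. ennreal (normal_density 0 (sqrt (t - s)) y))) \<and>
     (\<forall>ts :: real list. sorted ts \<and> ts \<noteq> [] \<and> hd ts \<ge> 0 \<longrightarrow>
        prob_space.indep_vars M (\<lambda>_. borel) (\<lambda>i x. B (ts ! Suc i) x - B (ts ! i) x) {..<length ts - 1})"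

definition natural_filtration :: "'a measure \<Rightarrow> (real \<Rightarrow> 'a \<Rightarrow> real) \<Rightarrow> real \<Rightarrow> 'a measure" where
  "natural_filtration M N t =
     sigma (space M) (\<Union>u\<in>{0<..t}. {N u -` A \<inter> space M | A. A \<in> sets borel})"

definition proportional_increments :: "'a measure \<Rightarrow> (real \<Rightarrow> 'a \<Rightarrow> real) \<Rightarrow> bool" where
  "proportional_increments M N \<longleftrightarrow>
     (\<forall>t>0. \<forall>s\<ge>0. \<not> (AE x in M. N t x = 0) \<longrightarrow>
        (AE x in M. real_cond_exp M (natural_filtration M N t) (\<lambda>y. N (t + s) y - N t y) x
                     = s / t * N t x))"

end

theory Submission
  imports Defs
begin

text \<open>
  With \<open>X\<^sub>0 = 0\<close> we have \<open>X\<^sub>t\<^sub>+\<^sub>s - X\<^sub>t = \<sigma>(t + s)(B\<^sub>t\<^sub>+\<^sub>s - B\<^sub>t) + (s/t) X\<^sub>t\<close>.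
  The second summand is \<open>\<F>\<^sub>t\<close>-measurable, and the increment \<open>B\<^sub>t\<^sub>+\<^sub>s - B\<^sub>t\<close> is centred and
  independent of \<open>\<F>\<^sub>t\<close>, so its conditional expectation vanishes.  For the independence,
  each \<open>X\<^sub>u\<close> is a function of \<open>B\<^sub>u\<close>, and by a \<open>\<pi>\<close>-\<open>\<lambda>\<close> argument it suffices that the increment
  is independent of every finite vector \<open>(B\<^sub>k)\<^sub>k\<^sub>\<in>\<^sub>K\<close> with \<open>K \<subseteq> [0, t]\<close>.  Almost surely
  \<open>B\<^sub>k = B\<^sub>k - B\<^sub>0\<close> is a partial sum of increments over a partition through \<open>K \<union> {0, t, t + s}\<close>,
  so this follows from the independence of increments.
\<close>

lemma sets_vimage_algebra_comp_subset:
  assumes "X \<in> measurable M N" and "g \<in> measurable N L"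
  shows "sets (vimage_algebra (space M) (\<lambda>x. g (X x)) L) \<subseteq> sets (vimage_algebra (space M) X N)"
proof (rule sets_image_in_sets)
  show "(\<lambda>x. g (X x)) \<in> measurable (vimage_algebra (space M) X N) L"
    by (rule measurable_compose[OF measurable_vimage_algebra1 assms(2)])
       (auto intro: measurable_space[OF assms(1)])
qed simp

context prob_space
begin

lemma indep_set_mono:
  "indep_set A B \<Longrightarrow> A' \<subseteq> A \<Longrightarrow> B' \<subseteq> B \<Longrightarrow> indep_set A' B'"
  unfolding indep_sets2_eq by blast

text \<open>
  \<^const>\<open>prob_space.indep_var\<close> requires both variables to have the same codomain type, so the
  independence of a random vector and a real random variable is stated below through the
  generated \<open>\<sigma>\<close>-algebras \<open>sets (vimage_algebra (space M) X S)\<close>.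
\<close>

lemma indep_var_indep_set_vimage:
  "indep_var S X T Y \<Longrightarrow>
    indep_set (sets (vimage_algebra (space M) X S)) (sets (vimage_algebra (space M) Y T))"
  by (simp add: indep_var_eq sets_vimage_algebra)

lemma indep_set_vimage_AE_cong:
  assumes indep: "indep_set (sets (vimage_algebra (space M) X S)) G"
    and eq: "AE x in M. X' x = X x"
    and X: "random_variable S X" and X': "random_variable S X'"
  shows "indep_set (sets (vimage_algebra (space M) X' S)) G"
  unfolding indep_sets2_eq
proof (intro conjI ballI)
  show "sets (vimage_algebra (space M) X' S) \<subseteq> events"
    using X' by (rule sets_image_in_sets[OF refl])
  show "G \<subseteq> events"
    using indep by (rule indep_setD_ev2)
  fix a g assume a: "a \<in> sets (vimage_algebra (space M) X' S)" and g: "g \<in> G"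
  then obtain A where A: "A \<in> sets S" "a = X' -` A \<inter> space M"
    using X' by (auto simp: sets_vimage_algebra2 measurable_space)
  have ev: "X' -` A \<inter> space M \<in> events" "X -` A \<inter> space M \<in> events" "g \<in> events"
    using A(1) X X' g \<open>G \<subseteq> events\<close> by auto
  have same: "AE x in M. x \<in> X' -` A \<inter> space M \<longleftrightarrow> x \<in> X -` A \<inter> space M"
    using eq by eventually_elim auto
  have "prob (a \<inter> g) = prob ((X -` A \<inter> space M) \<inter> g)"
    unfolding A(2) using same ev by (intro finite_measure_eq_AE) auto
  also have "\<dots> = prob (X -` A \<inter> space M) * prob g"
    using indep g A(1) by (intro indep_setD) (auto intro: in_vimage_algebra)
  also have "prob (X -` A \<inter> space M) = prob a"
    unfolding A(2) using same ev by (intro finite_measure_eq_AE) auto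
  finally show "prob (a \<inter> g) = prob a * prob g" .
qed

lemma indep_set_partial_sums_last:
  fixes Y :: "nat \<Rightarrow> 'a \<Rightarrow> real"
  assumes indep: "indep_vars (\<lambda>_. borel) Y {..<Suc m}"
  shows "indep_set (sets (vimage_algebra (space M) (\<lambda>x. \<lambda>j\<in>{..m}. \<Sum>i<j. Y i x) (\<Pi>\<^sub>M j\<in>{..m}. borel)))
                   (sets (vimage_algebra (space M) (Y m) borel))"
proof -
  let ?R1 = "\<lambda>x. restrict (\<lambda>i. Y i x) {..<m}" and ?R2 = "\<lambda>x. restrict (\<lambda>i. Y i x) {m}"
  have rv: "random_variable borel (Y i)" if "i \<le> m" for i
    using indep that by (simp add: indep_vars_def)
  have "indep_var (\<Pi>\<^sub>M i\<in>{..<m}. borel) ?R1 (\<Pi>\<^sub>M i\<in>{m}. borel) ?R2"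
    using indep by (rule indep_var_restrict) auto
  then have blocks: "indep_set (sets (vimage_algebra (space M) ?R1 (\<Pi>\<^sub>M i\<in>{..<m}. borel)))
                               (sets (vimage_algebra (space M) ?R2 (\<Pi>\<^sub>M i\<in>{m}. borel)))"
    by (rule indep_var_indep_set_vimage)
  have R1: "random_variable (\<Pi>\<^sub>M i\<in>{..<m}. borel) ?R1" and R2: "random_variable (\<Pi>\<^sub>M i\<in>{m}. borel) ?R2"
    using rv by (auto intro!: measurable_restrict)
  have sums: "(\<lambda>y. \<lambda>j\<in>{..m}. \<Sum>i<j. y i) \<in> (\<Pi>\<^sub>M i\<in>{..<m}. borel :: real measure) \<rightarrow>\<^sub>M (\<Pi>\<^sub>M j\<in>{..m}. borel)"
    by measurable
  have partial_sums: "(\<lambda>x. \<lambda>j\<in>{..m}. \<Sum>i<j. Y i x) = (\<lambda>x. (\<lambda>y. \<lambda>j\<in>{..m}. \<Sum>i<j. y i) (?R1 x))"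
    by (auto simp: fun_eq_iff intro!: sum.cong)
  have "sets (vimage_algebra (space M) (\<lambda>x. \<lambda>j\<in>{..m}. \<Sum>i<j. Y i x) (\<Pi>\<^sub>M j\<in>{..m}. borel))
      \<subseteq> sets (vimage_algebra (space M) ?R1 (\<Pi>\<^sub>M i\<in>{..<m}. borel))"
    by (subst partial_sums) (rule sets_vimage_algebra_comp_subset[OF R1 sums])
  moreover have "sets (vimage_algebra (space M) (Y m) borel)
      \<subseteq> sets (vimage_algebra (space M) ?R2 (\<Pi>\<^sub>M i\<in>{m}. borel))"
    using sets_vimage_algebra_comp_subset[OF R2 measurable_component_singleton[of m "{m}"]]
    by (simp add: fun_eq_iff)
  ultimately show ?thesis
    by (rule indep_set_mono[OF blocks])
qed

end

lemma space_natural_filtration [simp]: "space (natural_filtration M N t) = space M"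
  unfolding natural_filtration_def by (rule space_measure_of) auto

lemma sets_natural_filtration:
  "sets (natural_filtration M N t) =
     sigma_sets (space M) (\<Union>u\<in>{0<..t}. {N u -` A \<inter> space M | A. A \<in> sets borel})"
  unfolding natural_filtration_def by (rule sets_measure_of) auto

lemma subalgebra_natural_filtration:
  assumes "\<And>u. N u \<in> borel_measurable M"
  shows "subalgebra M (natural_filtration M N t)"
  unfolding subalgebra_def sets_natural_filtration
  using assms by (auto intro!: sets.sigma_sets_subset)

lemma measurable_natural_filtration:
  assumes "0 < u" "u \<le> t"
  shows "N u \<in> borel_measurable (natural_filtration M N t)"
proof (rule measurableI)
  fix A :: "real set" assume "A \<in> sets borel"
  then show "N u -` A \<inter> space (natural_filtration M N t) \<in> sets (natural_filtration M N t)"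
    using assms unfolding sets_natural_filtration by (intro sigma_sets.Basic UN_I[of u]) auto
qed simp

lemma (in sigma_finite_subalgebra) real_cond_exp_linear:
  fixes c d :: real
  assumes "integrable M f" "integrable M g"
  shows "AE x in M. real_cond_exp M F (\<lambda>x. c * f x + d * g x) x
                    = c * real_cond_exp M F f x + d * real_cond_exp M F g x"
proof -
  have "AE x in M. real_cond_exp M F (\<lambda>x. c * f x + d * g x) x
                   = real_cond_exp M F (\<lambda>x. c * f x) x + real_cond_exp M F (\<lambda>x. d * g x) x"
    using assms by (intro real_cond_exp_add) auto
  moreover have "AE x in M. real_cond_exp M F (\<lambda>x. c * f x) x = c * real_cond_exp M F f x"
    using assms(1) by (rule real_cond_exp_cmult)
  moreover have "AE x in M. real_cond_exp M F (\<lambda>x. d * g x) x = d * real_cond_exp M F g x"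
    using assms(2) by (rule real_cond_exp_cmult)
  ultimately show ?thesis
    by eventually_elim simp
qed

context prob_space
begin

lemma indep_set_natural_filtration:
  assumes H: "space H = space M"
    and indep: "\<And>K. finite K \<Longrightarrow> K \<subseteq> {0<..t} \<Longrightarrow>
      indep_set (sets (vimage_algebra (space M) (\<lambda>x. \<lambda>k\<in>K. N k x) (\<Pi>\<^sub>M k\<in>K. borel))) (sets H)"
  shows "indep_set (sets (natural_filtration M N t)) (sets H)"
proof -
  define cyl where "cyl K A = {x \<in> space M. \<forall>k\<in>K. N k x \<in> A k}" for K A
  define P where "P = {cyl K A | K A. finite K \<and> K \<subseteq> {0<..t} \<and> (\<forall>k\<in>K. A k \<in> sets borel)}"
  have cyl_vimage: "cyl K A \<in> sets (vimage_algebra (space M) (\<lambda>x. \<lambda>k\<in>K. N k x) (\<Pi>\<^sub>M k\<in>K. borel))"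
    if "finite K" "\<forall>k\<in>K. A k \<in> sets borel" for K A
  proof -
    have "cyl K A = (\<lambda>x. \<lambda>k\<in>K. N k x) -` (\<Pi>\<^sub>E k\<in>K. A k) \<inter> space M"
      by (auto simp: cyl_def)
    then show ?thesis
      using that by (auto intro!: in_vimage_algebra sets_PiM_I_finite)
  qed
  have cyl_ev: "cyl K A \<in> events"
    if "finite K" "K \<subseteq> {0<..t}" "\<forall>k\<in>K. A k \<in> sets borel" for K A
    using indep_setD_ev1[OF indep[OF that(1,2)]] cyl_vimage[OF that(1,3)] by blast
  have "indep_set P (sets H)"
    unfolding indep_sets2_eq
  proof (intro conjI ballI)
    show "P \<subseteq> events"
      using cyl_ev by (auto simp: P_def)
    show "sets H \<subseteq> events"
      using indep[of "{}"] by (auto dest: indep_setD_ev2)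
    fix p h assume "p \<in> P" and h: "h \<in> sets H"
    then obtain K A where "p = cyl K A" "finite K" "K \<subseteq> {0<..t}" "\<forall>k\<in>K. A k \<in> sets borel"
      by (auto simp: P_def)
    then show "prob (p \<inter> h) = prob p * prob h"
      using indep_setD[OF indep cyl_vimage h] by simp
  qed
  moreover have "Int_stable P"
  proof (rule Int_stableI)
    fix p q assume "p \<in> P" "q \<in> P"
    then obtain K1 A1 K2 A2 where
      p: "p = cyl K1 A1" "finite K1" "K1 \<subseteq> {0<..t}" "\<forall>k\<in>K1. A1 k \<in> sets borel" and
      q: "q = cyl K2 A2" "finite K2" "K2 \<subseteq> {0<..t}" "\<forall>k\<in>K2. A2 k \<in> sets borel"
      by (auto simp: P_def)
    define A where "A k = (if k \<in> K1 then A1 k else UNIV) \<inter> (if k \<in> K2 then A2 k else UNIV)" for k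
    have "p \<inter> q = cyl (K1 \<union> K2) A"
      using p(1) q(1) by (auto simp: cyl_def A_def)
    moreover have "\<forall>k\<in>K1 \<union> K2. A k \<in> sets borel"
      using p(4) q(4) by (auto simp: A_def)
    ultimately show "p \<inter> q \<in> P"
      using p q unfolding P_def by blast
  qed
  moreover have "Int_stable (sets H)"
    by (auto intro: Int_stableI)
  ultimately have "indep_set (sigma_sets (space M) P) (sigma_sets (space M) (sets H))"
    by (rule indep_set_sigma_sets)
  then have "indep_set (sigma_sets (space M) P) (sets H)"
    using sets.sigma_sets_eq[of H] H by simp
  moreover have "sets (natural_filtration M N t) \<subseteq> sigma_sets (space M) P"
  proof -
    have "N u -` A \<inter> space M \<in> P" if "u \<in> {0<..t}" "A \<in> sets borel" for u A
    proof -
      have "N u -` A \<inter> space M = cyl {u} (\<lambda>_. A)"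
        by (auto simp: cyl_def)
      then show ?thesis
        using that unfolding P_def by blast
    qed
    then have "(\<Union>u\<in>{0<..t}. {N u -` A \<inter> space M | A. A \<in> sets borel}) \<subseteq> P"
      by blast
    then show ?thesis
      unfolding sets_natural_filtration by (rule sigma_sets_mono')
  qed
  ultimately show ?thesis
    by (rule indep_set_mono) simp
qed

lemma sigma_finite_subalgebra_if_subalgebra:
  "subalgebra M F \<Longrightarrow> sigma_finite_subalgebra M F"
  by (intro finite_measure_subalgebra_is_sigma_finite)
    (simp add: finite_measure_subalgebra_def finite_measure_subalgebra_axioms_def finite_measure_axioms)

lemma real_cond_exp_indep:
  assumes F: "subalgebra M F" and f: "integrable M f"
    and indep: "indep_set (sets F) (sets (vimage_algebra (space M) f borel))"
  shows "AE x in M. real_cond_exp M F f x = expectation f"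
proof -
  interpret sigma_finite_subalgebra M F
    using F by (rule sigma_finite_subalgebra_if_subalgebra)
  have f_rv: "random_variable borel f"
    using f by (rule borel_measurable_integrable)
  show ?thesis
  proof (rule real_cond_exp_charact)
    fix A assume A: "A \<in> sets F"
    then have A_ev: "A \<in> events"
      using F by (auto simp: subalgebra_def)
    have "sets (vimage_algebra (space M) (indicator A :: 'a \<Rightarrow> real) borel) \<subseteq> sets F"
      using A F by (intro sets_image_in_sets) (auto simp: subalgebra_def)
    then have "indep_var borel (indicator A :: 'a \<Rightarrow> real) borel f"
      unfolding indep_var_eq sets_vimage_algebra[symmetric]
      using A_ev f_rv by (auto intro!: indep_set_mono[OF indep])
    then have "(\<integral>x. indicator A x * f x \<partial>M) = (\<integral>x. indicator A x \<partial>M) * expectation f"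
      using A_ev f by (intro indep_var_lebesgue_integral) (auto simp: emeasure_eq_measure)
    then show "(\<integral>x\<in>A. f x \<partial>M) = (\<integral>x\<in>A. expectation f \<partial>M)"
      using A_ev by (simp add: set_lebesgue_integral_def)
  qed (use f in auto)
qed

end

lemma
  assumes "std_brownian_motion M B"
  shows std_brownian_motion_prob_space: "prob_space M"
    and std_brownian_motion_measurable: "B t \<in> borel_measurable M"
    and std_brownian_motion_start: "AE x in M. B 0 x = 0"
    and std_brownian_motion_increment_distributed: "0 \<le> u \<Longrightarrow> u < v \<Longrightarrow>
      distributed M lborel (\<lambda>x. B v x - B u x) (\<lambda>y. ennreal (normal_density 0 (sqrt (v - u)) y))"
    and std_brownian_motion_indep_increments: "sorted ts \<Longrightarrow> ts \<noteq> [] \<Longrightarrow> 0 \<le> hd ts \<Longrightarrow>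
      prob_space.indep_vars M (\<lambda>_. borel) (\<lambda>i x. B (ts ! Suc i) x - B (ts ! i) x) {..<length ts - 1}"
  using assms by (simp_all add: std_brownian_motion_def)

lemma
  assumes bm: "std_brownian_motion M B" and "0 \<le> u" "u \<le> v"
  shows integrable_brownian_increment: "integrable M (\<lambda>x. B v x - B u x)"
    and expectation_brownian_increment: "prob_space.expectation M (\<lambda>x. B v x - B u x) = 0"
proof -
  interpret prob_space M
    using bm by (rule std_brownian_motion_prob_space)
  have "integrable M (\<lambda>x. B v x - B u x) \<and> expectation (\<lambda>x. B v x - B u x) = 0"
  proof (cases "u = v")
    case False
    then have distr: "distributed M lborel (\<lambda>x. B v x - B u x) (\<lambda>y. ennreal (normal_density 0 (sqrt (v - u)) y))"
      using assms by (intro std_brownian_motion_increment_distributed) auto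
    have sd: "0 < sqrt (v - u)"
      using assms False by simp
    show ?thesis
    proof
      show "integrable M (\<lambda>x. B v x - B u x)"
        using distr by (rule distributed_integrable_var) (simp_all add: integrable_normal_moment_nz_1[OF sd])
      show "expectation (\<lambda>x. B v x - B u x) = 0"
        using sd distr by (rule normal_distributed_expectation)
    qed
  qed simp
  then show "integrable M (\<lambda>x. B v x - B u x)" "expectation (\<lambda>x. B v x - B u x) = 0"
    by simp_all
qed

lemma integrable_brownian:
  assumes bm: "std_brownian_motion M B" and "0 \<le> u"
  shows "integrable M (B u)"
proof -
  have [measurable]: "B v \<in> borel_measurable M" for v
    using bm by (rule std_brownian_motion_measurable)
  have "AE x in M. B u x = B u x - B 0 x"
    using std_brownian_motion_start[OF bm] by eventually_elim simp
  then show ?thesis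
    using integrable_brownian_increment[OF bm order_refl \<open>0 \<le> u\<close>] by (subst integrable_cong_AE) auto
qed

lemma brownian_past_indep_increment:
  assumes bm: "std_brownian_motion M B"
    and K: "finite K" "K \<subseteq> {0..t}" and "0 \<le> t" "0 \<le> s"
  shows "prob_space.indep_set M
           (sets (vimage_algebra (space M) (\<lambda>x. \<lambda>k\<in>K. B k x) (\<Pi>\<^sub>M k\<in>K. borel)))
           (sets (vimage_algebra (space M) (\<lambda>x. B (t + s) x - B t x) borel))"
proof -
  interpret prob_space M
    using bm by (rule std_brownian_motion_prob_space)
  have [measurable]: "B u \<in> borel_measurable M" for u
    using bm by (rule std_brownian_motion_measurable)
  define L where "L = sorted_list_of_set (K - {0, t})"
  define ts where "ts = 0 # L @ [t, t + s]"
  define m where "m = Suc (length L)"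
  define Y where "Y = (\<lambda>i x. B (ts ! Suc i) x - B (ts ! i) x)"
  have L: "sorted L" "set L = K - {0, t}"
    using K by (simp_all add: L_def)
  have "sorted ts"
    using L K assms by (auto simp: ts_def sorted_append)
  then have "indep_vars (\<lambda>_. borel) Y {..<Suc m}"
    using std_brownian_motion_indep_increments[OF bm, of ts] by (simp add: Y_def ts_def m_def)
  then have "indep_set
      (sets (vimage_algebra (space M) (\<lambda>x. \<lambda>j\<in>{..m}. \<Sum>i<j. Y i x) (\<Pi>\<^sub>M j\<in>{..m}. borel)))
      (sets (vimage_algebra (space M) (Y m) borel))"
    by (rule indep_set_partial_sums_last)
  moreover have "Y m = (\<lambda>x. B (t + s) x - B t x)"
    by (simp add: Y_def ts_def m_def nth_append)
  ultimately have indep_sums: "indep_set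
      (sets (vimage_algebra (space M) (\<lambda>x. \<lambda>j\<in>{..m}. \<Sum>i<j. Y i x) (\<Pi>\<^sub>M j\<in>{..m}. borel)))
      (sets (vimage_algebra (space M) (\<lambda>x. B (t + s) x - B t x) borel))"
    by simp
  have "\<exists>j\<le>m. ts ! j = k" if k: "k \<in> K" for k
  proof -
    consider "k = 0" | "k = t" | "k \<in> set L"
      using k L(2) by auto
    then show ?thesis
    proof cases
      case 1
      then show ?thesis
        by (intro exI[of _ 0]) (simp add: ts_def)
    next
      case 2
      then show ?thesis
        by (intro exI[of _ m]) (simp add: ts_def m_def nth_append)
    next
      case 3
      then obtain j where "j < length L" "L ! j = k"
        by (auto simp: in_set_conv_nth)
      then show ?thesis
        by (intro exI[of _ "Suc j"]) (simp add: ts_def m_def nth_append)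
    qed
  qed
  then obtain idx where idx: "idx k \<le> m" "ts ! idx k = k" if "k \<in> K" for k
    by metis
  have select: "(\<lambda>y. \<lambda>k\<in>K. y (idx k)) \<in> (\<Pi>\<^sub>M j\<in>{..m}. borel) \<rightarrow>\<^sub>M (\<Pi>\<^sub>M k\<in>K. borel :: real measure)"
    using idx by (auto intro!: measurable_restrict measurable_component_singleton)
  have sums: "(\<lambda>x. \<lambda>j\<in>{..m}. \<Sum>i<j. Y i x) \<in> M \<rightarrow>\<^sub>M (\<Pi>\<^sub>M j\<in>{..m}. borel)"
    unfolding Y_def by measurable
  have telescope: "(\<lambda>x. \<lambda>k\<in>K. B k x - B 0 x) = (\<lambda>x. (\<lambda>y. \<lambda>k\<in>K. y (idx k)) (\<lambda>j\<in>{..m}. \<Sum>i<j. Y i x))"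
  proof -
    have "(\<Sum>i<n. Y i x) = B (ts ! n) x - B (ts ! 0) x" for n x
      unfolding Y_def by (rule sum_lessThan_telescope)
    moreover have "ts ! 0 = 0"
      by (simp add: ts_def)
    ultimately show ?thesis
      using idx by (auto simp: fun_eq_iff)
  qed
  have "sets (vimage_algebra (space M) (\<lambda>x. \<lambda>k\<in>K. B k x - B 0 x) (\<Pi>\<^sub>M k\<in>K. borel))
      \<subseteq> sets (vimage_algebra (space M) (\<lambda>x. \<lambda>j\<in>{..m}. \<Sum>i<j. Y i x) (\<Pi>\<^sub>M j\<in>{..m}. borel))"
    by (subst telescope) (rule sets_vimage_algebra_comp_subset[OF sums select])
  with indep_sums have "indep_set
      (sets (vimage_algebra (space M) (\<lambda>x. \<lambda>k\<in>K. B k x - B 0 x) (\<Pi>\<^sub>M k\<in>K. borel)))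
      (sets (vimage_algebra (space M) (\<lambda>x. B (t + s) x - B t x) borel))"
    by (rule indep_set_mono) simp
  moreover have "AE x in M. (\<lambda>k\<in>K. B k x) = (\<lambda>k\<in>K. B k x - B 0 x)"
    using std_brownian_motion_start[OF bm] by eventually_elim simp
  ultimately show ?thesis
    by (rule indep_set_vimage_AE_cong; measurable)
qed

lemma brownian_increment_indep_natural_filtration:
  assumes bm: "std_brownian_motion M B" and g: "\<And>u. g u \<in> borel_measurable borel"
    and "0 < t" "0 \<le> s"
  shows "prob_space.indep_set M (sets (natural_filtration M (\<lambda>u x. g u (B u x)) t))
           (sets (vimage_algebra (space M) (\<lambda>x. B (t + s) x - B t x) borel))"
proof -
  interpret prob_space M
    using bm by (rule std_brownian_motion_prob_space)
  have [measurable]: "B u \<in> borel_measurable M" for u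
    using bm by (rule std_brownian_motion_measurable)
  have [measurable]: "g u \<in> borel_measurable borel" for u
    by (rule g)
  show ?thesis
  proof (rule indep_set_natural_filtration)
    fix K assume K: "finite K" "K \<subseteq> {0<..t}"
    have transform: "(\<lambda>y. \<lambda>k\<in>K. g k (y k)) \<in> (\<Pi>\<^sub>M k\<in>K. borel) \<rightarrow>\<^sub>M (\<Pi>\<^sub>M k\<in>K. borel)"
      by measurable
    have past: "(\<lambda>x. \<lambda>k\<in>K. B k x) \<in> M \<rightarrow>\<^sub>M (\<Pi>\<^sub>M k\<in>K. borel)"
      by measurable
    have comp: "(\<lambda>x. \<lambda>k\<in>K. g k (B k x)) = (\<lambda>x. (\<lambda>y. \<lambda>k\<in>K. g k (y k)) (\<lambda>k\<in>K. B k x))"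
      by (simp add: fun_eq_iff)
    have "indep_set
        (sets (vimage_algebra (space M) (\<lambda>x. \<lambda>k\<in>K. B k x) (\<Pi>\<^sub>M k\<in>K. borel)))
        (sets (vimage_algebra (space M) (\<lambda>x. B (t + s) x - B t x) borel))"
      using K \<open>0 < t\<close> \<open>0 \<le> s\<close> by (intro brownian_past_indep_increment[OF bm]) auto
    moreover have "sets (vimage_algebra (space M) (\<lambda>x. \<lambda>k\<in>K. g k (B k x)) (\<Pi>\<^sub>M k\<in>K. borel))
        \<subseteq> sets (vimage_algebra (space M) (\<lambda>x. \<lambda>k\<in>K. B k x) (\<Pi>\<^sub>M k\<in>K. borel))"
      by (subst comp) (rule sets_vimage_algebra_comp_subset[OF past transform])
    ultimately show "indep_set
        (sets (vimage_algebra (space M) (\<lambda>x. \<lambda>k\<in>K. g k (B k x)) (\<Pi>\<^sub>M k\<in>K. borel)))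
        (sets (vimage_algebra (space M) (\<lambda>x. B (t + s) x - B t x) borel))"
      by (rule indep_set_mono) simp
  qed simp_all
qed

lemma real_cond_exp_brownian_increment:
  assumes bm: "std_brownian_motion M B" and g: "\<And>u. g u \<in> borel_measurable borel"
    and "0 < t" "0 \<le> s"
  shows "AE x in M. real_cond_exp M (natural_filtration M (\<lambda>u x. g u (B u x)) t)
                      (\<lambda>x. B (t + s) x - B t x) x = 0"
proof -
  interpret prob_space M
    using bm by (rule std_brownian_motion_prob_space)
  have [measurable]: "B u \<in> borel_measurable M" for u
    using bm by (rule std_brownian_motion_measurable)
  have [measurable]: "g u \<in> borel_measurable borel" for u
    by (rule g)
  have "subalgebra M (natural_filtration M (\<lambda>u x. g u (B u x)) t)"
    by (rule subalgebra_natural_filtration) measurable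
  moreover have "integrable M (\<lambda>x. B (t + s) x - B t x)"
    using assms by (intro integrable_brownian_increment[OF bm]) auto
  moreover have "indep_set (sets (natural_filtration M (\<lambda>u x. g u (B u x)) t))
                   (sets (vimage_algebra (space M) (\<lambda>x. B (t + s) x - B t x) borel))"
    using bm g assms(3,4) by (rule brownian_increment_indep_natural_filtration)
  ultimately have "AE x in M. real_cond_exp M (natural_filtration M (\<lambda>u x. g u (B u x)) t)
                     (\<lambda>x. B (t + s) x - B t x) x = expectation (\<lambda>x. B (t + s) x - B t x)"
    by (rule real_cond_exp_indep)
  then show ?thesis
    using assms by (simp add: expectation_brownian_increment[OF bm])
qed

lemma real_cond_exp_increment_time_scaled_brownian:
  fixes \<sigma> a :: real
  assumes bm: "std_brownian_motion M B" and "0 < t" "0 \<le> s"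
  defines "X \<equiv> \<lambda>u x. \<sigma> * u * B u x + a * u"
  shows "AE x in M. real_cond_exp M (natural_filtration M X t) (\<lambda>y. X (t + s) y - X t y) x
                      = s / t * X t x"
proof -
  interpret prob_space M
    using bm by (rule std_brownian_motion_prob_space)
  have [measurable]: "B u \<in> borel_measurable M" for u
    using bm by (rule std_brownian_motion_measurable)
  interpret sigma_finite_subalgebra M "natural_filtration M X t"
    by (intro sigma_finite_subalgebra_if_subalgebra subalgebra_natural_filtration) (simp add: X_def)
  let ?E = "real_cond_exp M (natural_filtration M X t)"
  have X_incr: "(\<lambda>y. X (t + s) y - X t y) = (\<lambda>y. \<sigma> * (t + s) * (B (t + s) y - B t y) + s / t * X t y)"
    using assms by (simp add: X_def fun_eq_iff field_simps)
  have "integrable M (\<lambda>y. B (t + s) y - B t y)" "integrable M (X t)"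
    using assms integrable_brownian_increment[OF bm] integrable_brownian[OF bm] by (auto simp: X_def)
  then have linear: "AE x in M. ?E (\<lambda>y. \<sigma> * (t + s) * (B (t + s) y - B t y) + s / t * X t y) x
      = \<sigma> * (t + s) * ?E (\<lambda>y. B (t + s) y - B t y) x + s / t * ?E (X t) x"
    by (rule real_cond_exp_linear)
  have increment: "AE x in M. ?E (\<lambda>y. B (t + s) y - B t y) x = 0"
    using real_cond_exp_brownian_increment[OF bm, of "\<lambda>u y. \<sigma> * u * y + a * u"] assms
    by (simp add: X_def)
  have present: "AE x in M. ?E (X t) x = X t x"
    using \<open>integrable M (X t)\<close> measurable_natural_filtration[OF \<open>0 < t\<close> order_refl]
    by (rule real_cond_exp_F_meas)
  show ?thesis
    unfolding X_incr using linear increment present by eventually_elim simp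
qed

theorem mainTheorem1:
  fixes M :: "'a measure" and B :: "real \<Rightarrow> 'a \<Rightarrow> real" and a \<sigma> X0 :: real
  assumes "std_brownian_motion M B"
    and "X0 = 0"
  shows "proportional_increments M (\<lambda>t x. X0 + \<sigma> * t * B t x + a * t)"
proof -
  have process: "(\<lambda>t x. X0 + \<sigma> * t * B t x + a * t) = (\<lambda>u x. \<sigma> * u * B u x + a * u)"
    using assms(2) by simp
  \<comment> \<open>The identity holds for every \<open>t > 0\<close>.\<close>
  show ?thesis
    unfolding proportional_increments_def process
    using real_cond_exp_increment_time_scaled_brownian[OF assms(1)] by blast
qed

end
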